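(* Let $a, b \in \mathbb{N}$ and $n \in \mathbb{Z}^+$. Consider, in the ring $\mathbb{Z}$, the Frobenius template $(\mathbb{N}, (n + \mathbb{N}) \cup \{0\}, \mathbb{N})$. If $a, b$ are coprime and $n - 1$ is divisible by neither $a$ nor $b$, then \[ \mathrm{Frob}(a, b) = (a + b)n + \chi(a, b) + \mathbb{N}, \] where $\mathrm{Frob}$ is taken with respect to this template.
   Context: $\mathbb{N}$ denotes the nonnegative integers and $\mathbb{Z}^+ = \mathbb{N}\setminus\{0\}$; for $S \subseteq \mathbb{Z}$ and $g \in \mathbb{Z}$, $g + S = \{g + s : s \in S\}$. For coprime $a, b \in \mathbb{N}$, $\chi(a,b)$ denotes the least $w \in \mathbb{N}$ such that $w + \mathbb{N} \subseteq \{\lambda_1 a + \lambda_2 b : \lambda_1, \lambda_2 \in \mathbb{N}\}$; it equals $(a-1)(b-1)$. For the template $(\mathbb{N}, (n + \mathbb{N}) \cup \{0\}, \mathbb{N})$: $MN(a, b) = \{\lambda_1 a + \lambda_2 b : \lambda_1, \lambda_2 \in (n + \mathbb{N}) \cup \{0\}\}$ and $\mathrm{Frob}(a, b) = \{w \in \mathbb{Z} : w + \mathbb{N} \subseteq MN(a, b)\}$. *)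

theory Defs
  imports Main
begin

definition semigrp2 :: "int \<Rightarrow> int \<Rightarrow> int set" where
  "semigrp2 a b = {l1 * a + l2 * b | l1 l2 :: int. l1 \<ge> 0 \<and> l2 \<ge> 0}"

definition chi :: "int \<Rightarrow> int \<Rightarrow> int" where
  "chi a b = (LEAST w :: int. w \<ge> 0 \<and> (\<forall>k::int. k \<ge> 0 \<longrightarrow> w + k \<in> semigrp2 a b))"

definition coeffset :: "int \<Rightarrow> int set" where
  "coeffset n = {x. x \<ge> n} \<union> {0}"

definition MN :: "int \<Rightarrow> int \<Rightarrow> int \<Rightarrow> int set" where
  "MN n a b = {l1 * a + l2 * b | l1 l2. l1 \<in> coeffset n \<and> l2 \<in> coeffset n}"

definition Frob :: "int \<Rightarrow> int \<Rightarrow> int \<Rightarrow> int set" where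
  "Frob n a b = {w :: int. \<forall>k::int. k \<ge> 0 \<longrightarrow> w + k \<in> MN n a b}"

end

theory Submission
  imports Defs
begin

text \<open>A sum with both coefficients at least \<open>n\<close> is \<open>(a + b) n\<close> plus an element of the
  semigroup \<open>\<langle>a, b\<rangle>\<close>; the only other elements of \<open>MN n a b\<close> are multiples of \<open>a\<close> or of \<open>b\<close>.
  By Sylvester's theorem the shifted semigroup contains every integer from \<open>(a + b) n + \<chi>(a, b)\<close>
  on, and misses its Frobenius number \<open>(a + b) n + ab - a - b\<close>. That number is not a multiple
  of \<open>a\<close> either, since modulo \<open>a\<close> it is congruent to \<open>b (n - 1)\<close>, and \<open>a\<close> is coprime to \<open>b\<close>
  but does not divide \<open>n - 1\<close>; symmetrically for \<open>b\<close>.\<close>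

lemma semigrp2_if_ge_conductor:
  fixes a b x :: int
  assumes "a \<ge> 1" "b \<ge> 1" "coprime a b" "x \<ge> (a - 1) * (b - 1)"
  shows "x \<in> semigrp2 a b"
proof -
  obtain u v where "u * a + v * b = 1"
    using bezout_int[of a b] assms(3) by auto
  define l1 where "l1 = (x * u) mod b"
  have l1: "0 \<le> l1" "l1 \<le> b - 1"
    using assms(2) unfolding l1_def by auto
  have "(l1 * a) mod b = (x * (u * a)) mod b"
    unfolding l1_def by (simp add: mod_mult_left_eq mult.assoc)
  also have "\<dots> = (x - x * v * b) mod b"
    using \<open>u * a + v * b = 1\<close> by (simp add: eq_diff_eq[symmetric] right_diff_distrib mult.assoc)
  also have "\<dots> = x mod b"
    by (simp add: mod_eq_dvd_iff)
  finally obtain l2 where l2: "x - l1 * a = b * l2"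
    by (metis dvd_def mod_eq_dvd_iff)
  have "l1 * a \<le> (b - 1) * a"
    using l1 assms(1) by (simp add: mult_right_mono)
  then have "b * (l2 + 1) > 0"
    using l2 assms(4) by (simp add: algebra_simps)
  then have "l2 \<ge> 0"
    using assms(2) by (simp add: zero_less_mult_iff)
  then show ?thesis
    unfolding semigrp2_def using l1 l2
    by (intro CollectI exI[of _ l1] exI[of _ l2]) (simp add: algebra_simps)
qed

lemma frobenius_number_notin_semigrp2:
  fixes a b :: int
  assumes "a \<ge> 1" "b \<ge> 1" "coprime a b"
  shows "a * b - a - b \<notin> semigrp2 a b"
proof
  assume "a * b - a - b \<in> semigrp2 a b"
  then obtain l1 l2 where l: "l1 \<ge> 0" "l2 \<ge> 0" "a * b - a - b = l1 * a + l2 * b"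
    unfolding semigrp2_def by blast
  have "(l1 + 1) * a = b * (a - 1 - l2)"
    using l(3) by (simp add: algebra_simps)
  then have "b dvd l1 + 1"
    using assms(3) by (metis coprime_commute coprime_dvd_mult_left_iff dvd_triv_left)
  then have "l1 + 1 \<ge> b"
    using l(1) by (simp add: zdvd_imp_le)
  have "(l2 + 1) * b = a * (b - 1 - l1)"
    using l(3) by (simp add: algebra_simps)
  then have "a dvd l2 + 1"
    using assms(3) by (metis coprime_dvd_mult_left_iff dvd_triv_left)
  then have "l2 + 1 \<ge> a"
    using l(2) by (simp add: zdvd_imp_le)
  have "(b - 1) * a \<le> l1 * a"
    using \<open>l1 + 1 \<ge> b\<close> assms(1) by (intro mult_right_mono) simp_all
  moreover have "(a - 1) * b \<le> l2 * b"
    using \<open>l2 + 1 \<ge> a\<close> assms(2) by (intro mult_right_mono) simp_all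
  moreover have "a * b > 0"
    using assms(1,2) by simp
  ultimately show False
    using l(3) by (simp add: algebra_simps)
qed

lemma chi_coprime:
  fixes a b :: int
  assumes "a \<ge> 1" "b \<ge> 1" "coprime a b"
  shows "chi a b = (a - 1) * (b - 1)"
  unfolding chi_def
proof (rule Least_equality)
  show "(a - 1) * (b - 1) \<ge> 0 \<and> (\<forall>k \<ge> 0. (a - 1) * (b - 1) + k \<in> semigrp2 a b)"
    using assms semigrp2_if_ge_conductor by simp
next
  fix y :: int
  assume y: "y \<ge> 0 \<and> (\<forall>k \<ge> 0. y + k \<in> semigrp2 a b)"
  show "(a - 1) * (b - 1) \<le> y"
  proof (rule ccontr)
    assume "\<not> ?thesis"
    then have "a * b - a - b - y \<ge> 0"
      by (simp add: algebra_simps)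
    then have "y + (a * b - a - b - y) \<in> semigrp2 a b"
      using y by blast
    then show False
      using frobenius_number_notin_semigrp2[OF assms] by (simp add: algebra_simps)
  qed
qed

lemma shift_semigrp2_in_MN:
  fixes a b n x :: int
  assumes "x \<in> semigrp2 a b"
  shows "(a + b) * n + x \<in> MN n a b"
proof -
  obtain l1 l2 where l: "l1 \<ge> 0" "l2 \<ge> 0" "x = l1 * a + l2 * b"
    using assms unfolding semigrp2_def by blast
  then have "(a + b) * n + x = (l1 + n) * a + (l2 + n) * b"
    by (simp add: algebra_simps)
  moreover have "l1 + n \<in> coeffset n" "l2 + n \<in> coeffset n"
    using l unfolding coeffset_def by auto
  ultimately show ?thesis
    unfolding MN_def by blast
qed

lemma MN_memberE:
  fixes a b n x :: int
  assumes "x \<in> MN n a b"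
  obtains "x - (a + b) * n \<in> semigrp2 a b" | l where "x = l * a" | l where "x = l * b"
proof -
  obtain l1 l2 where l: "l1 \<in> coeffset n" "l2 \<in> coeffset n" "x = l1 * a + l2 * b"
    using assms unfolding MN_def by blast
  consider "l1 = 0" | "l2 = 0" | "l1 \<ge> n" "l2 \<ge> n"
    using l(1,2) unfolding coeffset_def by blast
  then show thesis
  proof cases
    case 3
    then have "x - (a + b) * n = (l1 - n) * a + (l2 - n) * b" "l1 - n \<ge> 0" "l2 - n \<ge> 0"
      using l(3) by (simp_all add: algebra_simps)
    then show thesis
      using that(1) unfolding semigrp2_def by blast
  qed (use l(3) that(2,3) in auto)
qed

lemma dvd_pred_if_shifted_frobenius_number_multiple:
  fixes a b n l :: int
  assumes "coprime a b" "(a + b) * n + a * b - a - b = l * a"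
  shows "a dvd n - 1"
proof -
  have "b * (n - 1) = a * (l - n - b + 1)"
    using assms(2) by (simp add: algebra_simps)
  then show ?thesis
    using assms(1) by (metis coprime_dvd_mult_right_iff dvd_triv_left)
qed

lemma shifted_frobenius_number_notin_MN:
  fixes a b n :: int
  assumes "a \<ge> 1" "b \<ge> 1" "coprime a b" "\<not> a dvd n - 1" "\<not> b dvd n - 1"
  shows "(a + b) * n + a * b - a - b \<notin> MN n a b"
proof
  assume "(a + b) * n + a * b - a - b \<in> MN n a b"
  then show False
  proof (cases rule: MN_memberE)
    case 1
    then show False
      using frobenius_number_notin_semigrp2[OF assms(1-3)] by (simp add: algebra_simps)
  next
    case (2 l)
    then show False
      using dvd_pred_if_shifted_frobenius_number_multiple assms(3,4) by blast
  next
    case (3 l)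
    then have "(b + a) * n + b * a - b - a = l * b"
      by (simp add: algebra_simps)
    then show False
      using dvd_pred_if_shifted_frobenius_number_multiple assms(3,5) coprime_commute by blast
  qed
qed

lemma Frob_eq_atLeast:
  fixes a b n c :: int
  assumes "\<And>x. x \<ge> c \<Longrightarrow> x \<in> MN n a b" "c - 1 \<notin> MN n a b"
  shows "Frob n a b = {w. w \<ge> c}"
proof (intro set_eqI iffI)
  fix w
  assume "w \<in> Frob n a b"
  show "w \<in> {w. w \<ge> c}"
  proof (rule ccontr)
    assume "w \<notin> {w. w \<ge> c}"
    then have "c - 1 - w \<ge> 0"
      by simp
    then have "w + (c - 1 - w) \<in> MN n a b"
      using \<open>w \<in> Frob n a b\<close> unfolding Frob_def by blast
    then show False
      using assms(2) by simp
  qed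
next
  fix w
  assume "w \<in> {w. w \<ge> c}"
  then show "w \<in> Frob n a b"
    using assms(1) unfolding Frob_def by simp
qed

lemma nonzero_if_coprime_not_dvd:
  fixes a b c :: int
  assumes "coprime a b" "\<not> b dvd c"
  shows "a \<noteq> 0"
  using assms by (auto simp: unit_imp_dvd)

theorem proposition3p2:
  fixes a b n :: int
  assumes "a \<ge> 0" and "b \<ge> 0" and "n \<ge> 1"
    and "coprime a b"
    and "\<not> a dvd (n - 1)" and "\<not> b dvd (n - 1)"
  shows "Frob n a b = {w. w \<ge> (a + b) * n + chi a b}"
proof -
  have "a \<ge> 1" "b \<ge> 1"
    using assms nonzero_if_coprime_not_dvd[of a b "n - 1"] nonzero_if_coprime_not_dvd[of b a "n - 1"]
    by (auto simp: coprime_commute)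
  note ab = this assms(4)
  show ?thesis
  proof (rule Frob_eq_atLeast)
    fix x
    assume "x \<ge> (a + b) * n + chi a b"
    then have "x - (a + b) * n \<in> semigrp2 a b"
      using semigrp2_if_ge_conductor[OF ab] chi_coprime[OF ab] by simp
    then show "x \<in> MN n a b"
      using shift_semigrp2_in_MN[of "x - (a + b) * n" a b n] by simp
  next
    have "(a + b) * n + chi a b - 1 = (a + b) * n + a * b - a - b"
      using chi_coprime[OF ab] by (simp add: algebra_simps)
    then show "(a + b) * n + chi a b - 1 \<notin> MN n a b"
      using shifted_frobenius_number_notin_MN[OF ab assms(5,6)] by argo
  qed
qed

end
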